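(* Let $k\ge 3$ and let $c_1\ge c_2\ge\dots\ge c_k>0$ be constants with $\sum_{i=1}^k c_i=1$. For every $n$ such that all $c_i n$ are integers, let $G_n$ be the complete $k$-partite graph with parts $V_1,\dots,V_k$, $|V_i|=c_i n$. Then: (i) if $c_1\le \tfrac12$, $\mathrm{rc}(G_n)=n$; (ii) if $c_1>\tfrac12$, $\mathrm{rc}(G_n)=2c_1n-1$.
   Context: Robot crawler model: let $G=(V,E)$ be a finite connected simple graph with $|V|=n$. An initial weighting is a bijection $w_0:V\to\{-n,-n+1,\dots,-1\}$. At time $1$ the crawler visits $w_0^{-1}(-n)$. If the crawler visits vertex $v$ at time $t$, then $w_t(v)=t$ and $w_t(u)=w_{t-1}(u)$ for all $u\neq v$. If $\min_{y\in V}w_t(y)>0$, the process stops and $\mathcal{RC}(G,w_0):=t$. Otherwise, at time $t+1$ the crawler moves to the neighbour $u$ of $v$ minimising $w_t(u)$ (the weights are distinct, so this is well defined). A vertex is "cleaned" at the first time it is visited. With $\Omega_n$ the set of all $n!$ initial weightings, $\mathrm{rc}(G)=\min_{w_0\in\Omega_n}\mathcal{RC}(G,w_0)$, $\mathrm{RC}(G)=\max_{w_0\in\Omega_n}\mathcal{RC}(G,w_0)$, and $\overline{\mathrm{rc}}(G)=\mathbb{E}\,\mathcal{RC}(G,\overline{w_0})$ where $\overline{w_0}$ is uniformly distributed on $\Omega_n$. A complete $k$-partite graph with parts $V_1,\dots,V_k$ has an edge between $u$ and $v$ if and only if $u,v$ lie in different parts. *)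

theory Defs
  imports Complex_Main
begin

text \<open>A graph is given by a finite vertex set V and a symmetric irreflexive
adjacency relation E (only its restriction to V matters).\<close>

definition weightings :: "'a set \<Rightarrow> ('a \<Rightarrow> int) set" where
  "weightings V = {w. bij_betw w V {- int (card V) .. -1} \<and> (\<forall>x. x \<notin> V \<longrightarrow> w x = 0)}"

fun crawl :: "'a set \<Rightarrow> ('a \<Rightarrow> 'a \<Rightarrow> bool) \<Rightarrow> ('a \<Rightarrow> int) \<Rightarrow> nat \<Rightarrow> 'a \<times> ('a \<Rightarrow> int)" where
  "crawl V E w0 0 = (undefined, w0)"
| "crawl V E w0 (Suc t) =
     (let (v, w) = crawl V E w0 t;
          v' = (if t = 0 then (THE u. u \<in> V \<and> w0 u = - int (card V))
                else (THE u. u \<in> V \<and> E v u \<and> (\<forall>u'. u' \<in> V \<and> E v u' \<longrightarrow> w u \<le> w u')))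
      in (v', w(v' := int (Suc t))))"

definition RC_time :: "'a set \<Rightarrow> ('a \<Rightarrow> 'a \<Rightarrow> bool) \<Rightarrow> ('a \<Rightarrow> int) \<Rightarrow> nat" where
  "RC_time V E w0 = (LEAST t. t \<ge> 1 \<and> (\<forall>y\<in>V. snd (crawl V E w0 t) y > 0))"

definition rc :: "'a set \<Rightarrow> ('a \<Rightarrow> 'a \<Rightarrow> bool) \<Rightarrow> nat" where
  "rc V E = Min (RC_time V E ` weightings V)"

definition kpart_V :: "nat \<Rightarrow> (nat \<Rightarrow> nat) \<Rightarrow> (nat \<times> nat) set" where
  "kpart_V k s = {(i, j). 1 \<le> i \<and> i \<le> k \<and> j < s i}"

definition kpart_E :: "nat \<times> nat \<Rightarrow> nat \<times> nat \<Rightarrow> bool" where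
  "kpart_E u v = (fst u \<noteq> fst v)"

end

theory Submission
  imports Defs "HOL-Library.Product_Lexorder"
begin

text \<open>
  Lower bound: the crawler has to visit all $n$ vertices, and as there are no edges inside a part it
  never visits the same part at two consecutive times, so the $s_1 = c_1 n$ visits to $V_1$ take at
  least $2 s_1 - 1$ steps. Hence $\mathrm{rc}(G_n) \ge \max(n, 2 s_1 - 1)$.

  Upper bound: a weighting is good once the crawler provably follows a prescribed walk. If
  $s_1 \le n/2$, list the vertices part by part and interleave the two halves of the list;
  consecutive vertices are then at least $n/2 \ge s_1$ positions apart, hence in different parts,
  and weighting this Hamiltonian path in its own order makes the crawler finish after $n$ steps.
  If $s_1 > n/2$, weight $V_1$ first: the crawler alternates between $V_1$, which it takes in weight
  order, and the $m = n - s_1 < s_1$ remaining vertices, which it revisits round-robin because it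
  always returns to the least recently visited one; it finishes after $2 s_1 - 1$ steps.
\<close>

section \<open>The crawler\<close>

lemma crawl_Suc_vertex:
  "fst (crawl V E w0 (Suc t)) = (if t = 0 then (THE u. u \<in> V \<and> w0 u = - int (card V))
     else (THE u. u \<in> V \<and> E (fst (crawl V E w0 t)) u \<and>
        (\<forall>u'. u' \<in> V \<and> E (fst (crawl V E w0 t)) u' \<longrightarrow> snd (crawl V E w0 t) u \<le> snd (crawl V E w0 t) u')))"
  by (cases "crawl V E w0 t") (simp add: Let_def)

lemma crawl_Suc_weight:
  "snd (crawl V E w0 (Suc t)) = (snd (crawl V E w0 t))(fst (crawl V E w0 (Suc t)) := int (Suc t))"
  by (cases "crawl V E w0 t") (simp add: Let_def)

declare crawl.simps(2)[simp del]

lemma weightings_inj_on: "w \<in> weightings V \<Longrightarrow> inj_on w V"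
  by (simp add: weightings_def bij_betw_def)

lemma weightings_range: "w \<in> weightings V \<Longrightarrow> x \<in> V \<Longrightarrow> w x \<in> {- int (card V) .. -1}"
  by (auto simp: weightings_def bij_betw_def)

lemma weightings_nonpos: "w \<in> weightings V \<Longrightarrow> w x \<le> 0"
  using weightings_range[of w V x] by (cases "x \<in> V") (auto simp: weightings_def)

lemma weightings_finite: "finite V \<Longrightarrow> finite (weightings V)"
proof -
  assume fin: "finite V"
  have "weightings V \<subseteq> {f. \<forall>x. (x \<in> V \<longrightarrow> f x \<in> {- int (card V) .. -1}) \<and> (x \<notin> V \<longrightarrow> f x = 0)}"
    by (auto simp: weightings_def bij_betw_def)
  moreover have "finite {f. \<forall>x. (x \<in> V \<longrightarrow> f x \<in> {- int (card V) .. -1}) \<and> (x \<notin> V \<longrightarrow> f x = (0::int))}"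
    using fin by (intro finite_set_of_finite_funs) auto
  ultimately show ?thesis by (rule finite_subset)
qed

lemma the_first_vertex_eq:
  assumes "w0 \<in> weightings V" "x \<in> V" "w0 x = - int (card V)"
  shows "(THE u. u \<in> V \<and> w0 u = - int (card V)) = x"
proof (rule the_equality)
  fix u assume "u \<in> V \<and> w0 u = - int (card V)"
  then show "u = x" using assms weightings_inj_on[OF assms(1)] by (metis inj_onD)
qed (use assms in simp)

lemma the_greedy_choice_eq:
  fixes w :: "'a \<Rightarrow> 'b::linorder"
  assumes "x \<in> V" "E v x" "\<forall>u\<in>V. E v u \<and> u \<noteq> x \<longrightarrow> w x < w u"
  shows "(THE u. u \<in> V \<and> E v u \<and> (\<forall>u'. u' \<in> V \<and> E v u' \<longrightarrow> w u \<le> w u')) = x"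
proof (rule the_equality)
  have "\<forall>u'. u' \<in> V \<and> E v u' \<longrightarrow> w x \<le> w u'"
  proof (intro allI impI)
    fix u' assume "u' \<in> V \<and> E v u'"
    then show "w x \<le> w u'" using assms(3) by (cases "u' = x") (auto simp: less_imp_le)
  qed
  then show "x \<in> V \<and> E v x \<and> (\<forall>u'. u' \<in> V \<and> E v u' \<longrightarrow> w x \<le> w u')"
    using assms(1,2) by blast
next
  fix u assume "u \<in> V \<and> E v u \<and> (\<forall>u'. u' \<in> V \<and> E v u' \<longrightarrow> w u \<le> w u')"
  then show "u = x" using assms by (meson not_le)
qed

lemma RC_time_le: "1 \<le> T \<Longrightarrow> \<forall>y\<in>V. 0 < snd (crawl V E w0 T) y \<Longrightarrow> RC_time V E w0 \<le> T"
  unfolding RC_time_def by (rule Least_le) simp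

lemma rc_eqI:
  assumes "finite V" and lower: "\<And>w. w \<in> weightings V \<Longrightarrow> r \<le> RC_time V E w"
    and "w \<in> weightings V" "RC_time V E w \<le> r"
  shows "rc V E = r"
  unfolding rc_def
proof (rule Min_eqI)
  show "finite (RC_time V E ` weightings V)" by (intro finite_imageI weightings_finite assms(1))
  show "r \<in> RC_time V E ` weightings V"
    using assms(3,4) lower[OF assms(3)] by (metis image_eqI order_antisym)
qed (use lower in auto)

context
  fixes V :: "'a set" and E :: "'a \<Rightarrow> 'a \<Rightarrow> bool" and w0 :: "'a \<Rightarrow> int"
  assumes finite_V: "finite V" and V_nonempty: "V \<noteq> {}" and w0: "w0 \<in> weightings V"
    and has_neighbour: "\<forall>v\<in>V. \<exists>u\<in>V. E v u"
begin

abbreviation visit :: "nat \<Rightarrow> 'a" where "visit t \<equiv> fst (crawl V E w0 t)"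
abbreviation weight :: "nat \<Rightarrow> 'a \<Rightarrow> int" where "weight t \<equiv> snd (crawl V E w0 t)"

lemma crawl_first_vertex: "visit 1 \<in> V \<and> w0 (visit 1) = - int (card V)"
proof -
  have "- int (card V) \<in> w0 ` V"
    using w0 finite_V V_nonempty by (simp add: weightings_def bij_betw_def Suc_le_eq card_gt_0_iff)
  then obtain x where x: "x \<in> V" "w0 x = - int (card V)" by auto
  then show ?thesis using crawl_Suc_vertex[of V E w0 0] the_first_vertex_eq[OF w0 x] by simp
qed

lemma crawl_greedy_step:
  assumes inj: "inj_on (weight t) V" and "visit t \<in> V" "t \<noteq> 0"
  shows "visit (Suc t) \<in> V \<and> E (visit t) (visit (Suc t)) \<and>
    (\<forall>u\<in>V. E (visit t) u \<longrightarrow> weight t (visit (Suc t)) \<le> weight t u)"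
proof -
  let ?N = "{u\<in>V. E (visit t) u}"
  have "finite ?N" using finite_V by simp
  moreover have "?N \<noteq> {}" using has_neighbour assms(2) by auto
  ultimately obtain x where x: "x \<in> ?N" and x_Min: "Min (weight t ` ?N) = weight t x"
    by (rule obtains_MIN)
  have xmin: "\<forall>u\<in>?N. weight t x \<le> weight t u"
  proof
    fix u assume "u \<in> ?N"
    then have "Min (weight t ` ?N) \<le> weight t u" using finite_V by (intro Min_le) auto
    then show "weight t x \<le> weight t u" using x_Min by simp
  qed
  have "\<forall>u\<in>V. E (visit t) u \<and> u \<noteq> x \<longrightarrow> weight t x < weight t u"
    using xmin x inj by (auto simp: le_less dest: inj_onD)
  then have "visit (Suc t) = x"
    using crawl_Suc_vertex[of V E w0 t] the_greedy_choice_eq[of x V E "visit t"] x assms(3) by simp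
  then show ?thesis using x xmin by simp
qed

lemma crawl_invariant:
  "inj_on (weight t) V \<and> (\<forall>y\<in>V. weight t y \<le> int t) \<and> (1 \<le> t \<longrightarrow> visit t \<in> V)"
proof (induction t)
  case 0
  then show ?case using weightings_inj_on[OF w0] weightings_nonpos[OF w0] by simp
next
  case (Suc t)
  then have inj: "inj_on (weight t) V" and le: "\<forall>y\<in>V. weight t y \<le> int t" by auto
  have "visit (Suc t) \<in> V"
  proof (cases "t = 0")
    case True
    then show ?thesis using crawl_first_vertex by simp
  next
    case False
    then show ?thesis using crawl_greedy_step[OF inj] Suc.IH by simp
  qed
  moreover have "inj_on (weight (Suc t)) V"
  proof -
    have "int (Suc t) \<notin> weight t ` V" using le by fastforce
    then show ?thesis unfolding crawl_Suc_weight[of V E w0 t] by (rule inj_on_fun_updI[OF inj])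
  qed
  moreover have "\<forall>y\<in>V. weight (Suc t) y \<le> int (Suc t)"
    unfolding crawl_Suc_weight[of V E w0 t] using le by auto
  ultimately show ?case by blast
qed

lemma crawl_step:
  "1 \<le> t \<Longrightarrow> visit (Suc t) \<in> V \<and> E (visit t) (visit (Suc t)) \<and>
    (\<forall>u\<in>V. E (visit t) u \<longrightarrow> weight t (visit (Suc t)) \<le> weight t u)"
  using crawl_greedy_step crawl_invariant by simp

lemma positive_weight_visited: "0 < weight t y \<Longrightarrow> \<exists>r\<in>{1..t}. visit r = y"
proof (induction t)
  case 0
  then show ?case using weightings_nonpos[OF w0, of y] by simp
next
  case (Suc t)
  show ?case
  proof (cases "visit (Suc t) = y")
    case True
    then show ?thesis by (intro bexI[of _ "Suc t"]) auto
  next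
    case False
    then have "0 < weight t y" using Suc.prems unfolding crawl_Suc_weight[of V E w0 t] by simp
    then obtain r where "r \<in> {1..t}" "visit r = y" using Suc.IH by blast
    then show ?thesis by (intro bexI[of _ r]) auto
  qed
qed

definition unclean :: "nat \<Rightarrow> 'a set" where
  "unclean t = {y\<in>V. weight t y \<le> 0}"

lemma finite_unclean: "finite (unclean t)"
  using finite_V by (simp add: unclean_def)

lemma unclean_Suc_subset: "unclean (Suc t) \<subseteq> unclean t"
  unfolding unclean_def crawl_Suc_weight[of V E w0 t] by (auto split: if_splits)

lemma card_unclean_Suc_less:
  assumes "1 \<le> t" "y \<in> unclean t" "E (visit t) y"
  shows "card (unclean (Suc t)) < card (unclean t)"
proof -
  have "weight t (visit (Suc t)) \<le> 0"
    using crawl_step[OF assms(1)] assms(2,3) by (force simp: unclean_def)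
  then have "visit (Suc t) \<in> unclean t - unclean (Suc t)"
    using crawl_step[OF assms(1)] by (simp add: unclean_def crawl_Suc_weight[of V E w0 t])
  then have "unclean (Suc t) \<subset> unclean t" using unclean_Suc_subset by blast
  then show ?thesis by (rule psubset_card_mono[OF finite_unclean])
qed

context
  fixes f :: "'a \<Rightarrow> 'b"
  assumes multipartite: "\<And>u v. E u v \<longleftrightarrow> f u \<noteq> f v"
begin

text \<open>If no unclean vertex is adjacent to the current one, all unclean vertices lie in its part,
  and the next vertex, being in another part, is adjacent to all of them.\<close>
lemma card_unclean_Suc_Suc_less:
  assumes "1 \<le> t" "unclean t \<noteq> {}"
  shows "card (unclean (Suc (Suc t))) < card (unclean t)"
proof (cases "\<exists>y\<in>unclean t. E (visit t) y")
  case True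
  then have "card (unclean (Suc t)) < card (unclean t)"
    using card_unclean_Suc_less assms(1) by blast
  moreover have "card (unclean (Suc (Suc t))) \<le> card (unclean (Suc t))"
    by (intro card_mono finite_unclean unclean_Suc_subset)
  ultimately show ?thesis by simp
next
  case False
  then have same_part: "\<forall>y\<in>unclean t. f y = f (visit t)" by (auto simp: multipartite)
  have "E (visit t) (visit (Suc t))" using crawl_step[OF assms(1)] by blast
  then have other_part: "f (visit t) \<noteq> f (visit (Suc t))" by (simp add: multipartite)
  show ?thesis
  proof (cases "unclean (Suc t) = {}")
    case True
    then have "unclean (Suc (Suc t)) = {}" using unclean_Suc_subset[of "Suc t"] by blast
    then show ?thesis using assms(2) finite_unclean[of t] by (simp add: card_gt_0_iff)
  next
    case False
    then obtain y where y: "y \<in> unclean (Suc t)" by auto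
    then have "y \<in> unclean t" using unclean_Suc_subset by blast
    then have "E (visit (Suc t)) y"
      using same_part other_part by (auto simp: multipartite)
    then have "card (unclean (Suc (Suc t))) < card (unclean (Suc t))"
      using card_unclean_Suc_less[of "Suc t" y] y by simp
    moreover have "card (unclean (Suc t)) \<le> card (unclean t)"
      by (intro card_mono finite_unclean unclean_Suc_subset)
    ultimately show ?thesis by simp
  qed
qed

lemma card_unclean_le: "card (unclean (1 + 2 * j)) \<le> card V - j"
proof (induction j)
  case 0
  show ?case using finite_V by (simp add: unclean_def card_mono)
next
  case (Suc j)
  have sub: "unclean (1 + 2 * Suc j) \<subseteq> unclean (1 + 2 * j)"
    using unclean_Suc_subset[of "Suc (1 + 2 * j)"] unclean_Suc_subset[of "1 + 2 * j"] by simp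
  show ?case
  proof (cases "unclean (1 + 2 * j) = {}")
    case True
    then show ?thesis using sub by simp
  next
    case False
    then have "card (unclean (1 + 2 * Suc j)) < card (unclean (1 + 2 * j))"
      using card_unclean_Suc_Suc_less[of "1 + 2 * j"] by simp
    then show ?thesis using Suc.IH by linarith
  qed
qed

lemma RC_time_spec: "1 \<le> RC_time V E w0 \<and> (\<forall>y\<in>V. 0 < weight (RC_time V E w0) y)"
proof -
  have "unclean (1 + 2 * card V) = {}"
    using card_unclean_le[of "card V"] finite_unclean by simp
  then have "1 \<le> 1 + 2 * card V \<and> (\<forall>y\<in>V. 0 < weight (1 + 2 * card V) y)"
    by (auto simp: unclean_def)
  then show ?thesis unfolding RC_time_def
    by (rule LeastI[where P = "\<lambda>t. 1 \<le> t \<and> (\<forall>y\<in>V. 0 < weight t y)"])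
qed

lemma card_le_RC_time: "card V \<le> RC_time V E w0"
proof -
  let ?R = "RC_time V E w0"
  have "V \<subseteq> visit ` {1..?R}"
  proof
    fix y assume "y \<in> V"
    then obtain r where "r \<in> {1..?R}" "visit r = y"
      using RC_time_spec positive_weight_visited by blast
    then show "y \<in> visit ` {1..?R}" by blast
  qed
  then have "card V \<le> card (visit ` {1..?R})" by (intro card_mono) auto
  also have "\<dots> \<le> card {1..?R}" by (rule card_image_le) simp
  finally show ?thesis by simp
qed

text \<open>Consecutive visits are to different parts, so the times at which a part is visited form a
  set $A \subseteq \{1..R\}$ disjoint from its shift $A + 1 \subseteq \{2..R+1\}$.\<close>
lemma part_card_le_RC_time: "2 * card {y\<in>V. f y = a} \<le> RC_time V E w0 + 1"
proof -
  let ?R = "RC_time V E w0"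
  define A where "A = {r\<in>{1..?R}. f (visit r) = a}"
  have finite_A: "finite A" by (simp add: A_def)
  have "{y\<in>V. f y = a} \<subseteq> visit ` A"
  proof
    fix y assume y: "y \<in> {y\<in>V. f y = a}"
    then obtain r where "r \<in> {1..?R}" "visit r = y"
      using RC_time_spec positive_weight_visited by blast
    then show "y \<in> visit ` A" using y unfolding A_def by auto
  qed
  then have "card {y\<in>V. f y = a} \<le> card (visit ` A)"
    using finite_A by (intro card_mono) auto
  also have "\<dots> \<le> card A" using finite_A by (rule card_image_le)
  finally have part_le_A: "card {y\<in>V. f y = a} \<le> card A" .
  have "A \<inter> Suc ` A = {}"
  proof (rule ccontr)
    assume "A \<inter> Suc ` A \<noteq> {}"
    then obtain r where "r \<in> A" "Suc r \<in> A" by auto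
    then show False using crawl_step[of r] multipartite by (simp add: A_def)
  qed
  then have "card A + card (Suc ` A) = card (A \<union> Suc ` A)"
    using finite_A by (simp add: card_Un_disjoint)
  also have "\<dots> \<le> card {1..?R + 1}" by (intro card_mono) (auto simp: A_def)
  finally show ?thesis using part_le_A by (simp add: card_image)
qed

end

end

section \<open>Walks followed by the crawler\<close>

fun walk_weight :: "('a \<Rightarrow> int) \<Rightarrow> (nat \<Rightarrow> 'a) \<Rightarrow> nat \<Rightarrow> 'a \<Rightarrow> int" where
  "walk_weight w0 p 0 = w0"
| "walk_weight w0 p (Suc t) = (walk_weight w0 p t)(p (Suc t) := int (Suc t))"

lemma walk_weight_ge_visit: "1 \<le> r \<Longrightarrow> r \<le> t \<Longrightarrow> p r = y \<Longrightarrow> int r \<le> walk_weight w0 p t y"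
proof (induction t)
  case (Suc t)
  then show ?case by (cases "r = Suc t") auto
qed simp

lemma walk_weight_unchanged:
  "r \<le> t \<Longrightarrow> \<forall>q. r < q \<and> q \<le> t \<longrightarrow> p q \<noteq> y \<Longrightarrow> walk_weight w0 p t y = walk_weight w0 p r y"
proof (induction t)
  case (Suc t)
  show ?case
  proof (cases "r = Suc t")
    case False
    then have "r \<le> t" "y \<noteq> p (Suc t)"
      using Suc.prems(1) Suc.prems(2)[rule_format, of "Suc t"] by auto
    then show ?thesis using Suc by simp
  qed simp
qed simp

lemma walk_weight_unvisited: "\<forall>r\<in>{1..t}. p r \<noteq> y \<Longrightarrow> walk_weight w0 p t y = w0 y"
  using walk_weight_unchanged[of 0 t p y w0] by simp

lemma walk_weight_least_unvisited:
  assumes w0: "w0 \<in> weightings V" and "y \<in> V" "u \<in> V" "u \<noteq> y"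
    and unvisited: "\<forall>r\<in>{1..t}. p r \<noteq> y"
    and earlier_visited: "w0 u < w0 y \<Longrightarrow> \<exists>r\<in>{1..t}. p r = u"
  shows "walk_weight w0 p t y < walk_weight w0 p t u"
proof -
  have y_weight: "walk_weight w0 p t y = w0 y" by (rule walk_weight_unvisited[OF unvisited])
  have "w0 y < 0" using weightings_range[OF w0 \<open>y \<in> V\<close>] by simp
  show ?thesis
  proof (cases "\<exists>r\<in>{1..t}. p r = u")
    case True
    then obtain r where "r \<in> {1..t}" "p r = u" by blast
    then have "1 \<le> walk_weight w0 p t u" using walk_weight_ge_visit[of r t p u w0] by simp
    then show ?thesis using y_weight \<open>w0 y < 0\<close> by simp
  next
    case False
    then have "w0 y \<noteq> w0 u" and "\<not> w0 u < w0 y"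
      using earlier_visited inj_onD[OF weightings_inj_on[OF w0]] assms(2-4) by auto
    then show ?thesis using y_weight walk_weight_unvisited[of t p u w0] False by simp
  qed
qed

lemma walk_weight_least_recent:
  assumes "1 \<le> r" "p r = y" "r < q" "q \<le> t" "p q = u"
    and not_revisited: "\<forall>q'. r < q' \<and> q' \<le> t \<longrightarrow> p q' \<noteq> y"
  shows "walk_weight w0 p t y < walk_weight w0 p t u"
proof -
  have "walk_weight w0 p t y = walk_weight w0 p r y"
    using walk_weight_unchanged[of r t p y w0] assms(3,4) not_revisited by simp
  also have "\<dots> = int r" using assms(1,2) by (cases r) auto
  also have "\<dots> < int q" using assms(3) by simp
  also have "\<dots> \<le> walk_weight w0 p t u" using walk_weight_ge_visit[of q t p u w0] assms by simp
  finally show ?thesis .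
qed

text \<open>Each move of \<open>p\<close> is checked against the weights left by \<open>p\<close> itself, so the
  definition does not refer to the crawler.\<close>
definition greedy_walk :: "'a set \<Rightarrow> ('a \<Rightarrow> 'a \<Rightarrow> bool) \<Rightarrow> ('a \<Rightarrow> int) \<Rightarrow> (nat \<Rightarrow> 'a) \<Rightarrow> nat \<Rightarrow> bool"
  where "greedy_walk V E w0 p T \<longleftrightarrow> p 1 \<in> V \<and> w0 (p 1) = - int (card V) \<and>
    (\<forall>t. 1 \<le> t \<and> t < T \<longrightarrow> p (Suc t) \<in> V \<and> E (p t) (p (Suc t)) \<and>
      (\<forall>u\<in>V. E (p t) u \<and> u \<noteq> p (Suc t) \<longrightarrow> walk_weight w0 p t (p (Suc t)) < walk_weight w0 p t u))"

lemma crawl_greedy_walk: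
  assumes walk: "greedy_walk V E w0 p T" and w0: "w0 \<in> weightings V"
  shows "1 \<le> t \<Longrightarrow> t \<le> T \<Longrightarrow> crawl V E w0 t = (p t, walk_weight w0 p t)"
proof (induction t rule: nat_induct_at_least)
  case base
  have "(THE u. u \<in> V \<and> w0 u = - int (card V)) = p 1"
    using walk the_first_vertex_eq[OF w0] by (simp add: greedy_walk_def)
  then show ?case by (simp add: crawl.simps(2) Let_def fun_upd_def)
next
  case (Suc t)
  then have "crawl V E w0 t = (p t, walk_weight w0 p t)" by simp
  moreover have "(THE u. u \<in> V \<and> E (p t) u \<and>
      (\<forall>u'. u' \<in> V \<and> E (p t) u' \<longrightarrow> walk_weight w0 p t u \<le> walk_weight w0 p t u')) = p (Suc t)"
    using walk Suc by (intro the_greedy_choice_eq) (simp_all add: greedy_walk_def)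
  ultimately show ?case using Suc by (simp add: crawl.simps(2) Let_def fun_upd_def)
qed

lemma RC_time_le_greedy_walk:
  assumes "greedy_walk V E w0 p T" "w0 \<in> weightings V" "1 \<le> T" and covers: "V \<subseteq> p ` {1..T}"
  shows "RC_time V E w0 \<le> T"
proof (rule RC_time_le)
  show "\<forall>y\<in>V. 0 < snd (crawl V E w0 T) y"
  proof
    fix y assume "y \<in> V"
    then obtain r where "r \<in> {1..T}" "p r = y" using covers by blast
    then show "0 < snd (crawl V E w0 T) y"
      using crawl_greedy_walk[OF assms(1,2,3) order_refl] walk_weight_ge_visit[of r T p y w0] by simp
  qed
qed (rule assms(3))

definition enum_weighting :: "(nat \<Rightarrow> 'a) \<Rightarrow> nat \<Rightarrow> 'a \<Rightarrow> int" where
  "enum_weighting \<tau> n x = (if x \<in> \<tau> ` {..<n} then int (inv_into {..<n} \<tau> x) - int n else 0)"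

lemma enum_weighting_apply: "inj_on \<tau> {..<n} \<Longrightarrow> i < n \<Longrightarrow> enum_weighting \<tau> n (\<tau> i) = int i - int n"
  by (simp add: enum_weighting_def)

lemma enum_weighting_in_weightings:
  assumes bij: "bij_betw \<tau> {..<n} V"
  shows "enum_weighting \<tau> n \<in> weightings V"
proof -
  have V: "V = \<tau> ` {..<n}" and "card V = n" using bij by (auto simp: bij_betw_def card_image)
  have "bij_betw (\<lambda>i. int i - int n) {..<n} {- int n .. -1}"
    by (rule bij_betw_byWitness[where f' = "\<lambda>z. nat (z + int n)"]) auto
  then have "bij_betw ((\<lambda>i. int i - int n) \<circ> inv_into {..<n} \<tau>) V {- int n .. -1}"
    by (rule bij_betw_trans[OF bij_betw_inv_into[OF bij]])
  then have "bij_betw (\<lambda>x. int (inv_into {..<n} \<tau> x) - int n) V {- int n .. -1}"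
    by (simp add: comp_def)
  then have "bij_betw (enum_weighting \<tau> n) V {- int (card V) .. -1}"
    using bij_betw_cong[of V "enum_weighting \<tau> n" "\<lambda>x. int (inv_into {..<n} \<tau> x) - int n"]
      \<open>card V = n\<close> by (simp add: V enum_weighting_def)
  then show ?thesis by (auto simp: weightings_def enum_weighting_def V)
qed

lemma RC_time_hamiltonian_path:
  assumes bij: "bij_betw \<tau> {..<n} V" and "0 < n"
    and path: "\<And>t. Suc t < n \<Longrightarrow> E (\<tau> t) (\<tau> (Suc t))"
  shows "RC_time V E (enum_weighting \<tau> n) \<le> n"
proof -
  let ?w0 = "enum_weighting \<tau> n"
  let ?p = "\<lambda>t. \<tau> (t - 1)"
  have w0: "?w0 \<in> weightings V" using bij by (rule enum_weighting_in_weightings)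
  have inj: "inj_on \<tau> {..<n}" and V: "V = \<tau> ` {..<n}" and "card V = n"
    using bij by (auto simp: bij_betw_def card_image)
  have "greedy_walk V E ?w0 ?p n"
    unfolding greedy_walk_def
  proof (intro conjI allI impI ballI)
    show "?p 1 \<in> V" "?w0 (?p 1) = - int (card V)"
      using \<open>0 < n\<close> enum_weighting_apply[OF inj] \<open>card V = n\<close> by (auto simp: V)
  next
    fix t assume t: "1 \<le> t \<and> t < n"
    show "?p (Suc t) \<in> V" using t by (simp add: V)
    show "E (?p t) (?p (Suc t))" using path[of "t - 1"] t by simp
    fix u assume u: "u \<in> V" "E (?p t) u \<and> u \<noteq> ?p (Suc t)"
    then obtain c where c: "c < n" "u = \<tau> c" by (auto simp: V)
    show "walk_weight ?w0 ?p t (?p (Suc t)) < walk_weight ?w0 ?p t u"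
    proof (rule walk_weight_least_unvisited[OF w0])
      show "\<forall>r\<in>{1..t}. ?p r \<noteq> ?p (Suc t)"
      proof
        fix r assume "r \<in> {1..t}"
        then have "r - 1 \<noteq> t" "r - 1 < n" using t by auto
        then show "?p r \<noteq> ?p (Suc t)" using inj_on_eq_iff[OF inj] t by simp
      qed
      assume "?w0 u < ?w0 (?p (Suc t))"
      then have "c < t" using c t enum_weighting_apply[OF inj] by simp
      then show "\<exists>r\<in>{1..t}. ?p r = u" using c by (intro bexI[of _ "Suc c"]) auto
    qed (use t u in \<open>auto simp: V\<close>)
  qed
  moreover have "V \<subseteq> ?p ` {1..n}"
    unfolding V by (auto intro!: image_eqI[where x = "Suc _"])
  ultimately show ?thesis using w0 \<open>0 < n\<close> by (intro RC_time_le_greedy_walk) auto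
qed

section \<open>Round-robin walks\<close>

lemma mod_neq_in_window:
  fixes m i j :: nat
  assumes "i - m < j" "j < i"
  shows "j mod m \<noteq> i mod m"
proof
  assume "j mod m = i mod m"
  then have "m dvd (i - j)" using assms mod_eq_dvd_iff_nat[of j i m] by simp
  moreover have "0 < i - j" "i - j < m" using assms by auto
  ultimately show False by (simp add: nat_dvd_not_less)
qed

lemma mod_eq_in_window:
  fixes m i l :: nat
  assumes "m \<le> i" "l < m"
  shows "\<exists>j. i - m < j \<and> j \<le> i \<and> j mod m = l"
proof
  let ?d = "(i - l) mod m"
  have "?d < m" using assms by simp
  have "i - l = (i - l) div m * m + ?d" by simp
  then have "i - ?d = l + (i - l) div m * m" using assms by linarith
  then have "(i - ?d) mod m = l" using assms(2) by simp
  moreover have "i - m < i - ?d" using \<open>?d < m\<close> assms(1) by linarith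
  ultimately show "i - m < i - ?d \<and> i - ?d \<le> i \<and> (i - ?d) mod m = l" by simp
qed

text \<open>Vertex indices along a walk alternating between an independent set indexed by
  $\{0..s-1\}$, taken in order at the odd times, and the $m$ remaining vertices indexed by
  $\{s..s+m-1\}$, taken round-robin at the even times.\<close>
definition round_robin :: "nat \<Rightarrow> nat \<Rightarrow> nat \<Rightarrow> nat" where
  "round_robin s m t = (if odd t then t div 2 else s + (t div 2 - 1) mod m)"

lemma round_robin_odd [simp]: "round_robin s m (Suc (2 * i)) = i"
  by (simp add: round_robin_def)

lemma round_robin_even [simp]: "round_robin s m (Suc (Suc (2 * i))) = s + i mod m"
  by (simp add: round_robin_def)

lemma round_robin_eq_small_iff: "c < s \<Longrightarrow> round_robin s m r = c \<longleftrightarrow> odd r \<and> r div 2 = c"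
  by (auto simp: round_robin_def)

lemma round_robin_eq_large_iff:
  "r \<le> 2 * s - 1 \<Longrightarrow> round_robin s m r = s + l \<longleftrightarrow> even r \<and> (r div 2 - 1) mod m = l"
  unfolding round_robin_def by (auto elim!: oddE)

lemma round_robin_less: "1 \<le> m \<Longrightarrow> r \<le> 2 * s - 1 \<Longrightarrow> round_robin s m r < s + m"
  by (auto simp: round_robin_def)

lemma round_robin_first_visit:
  assumes "i < m" "1 \<le> r" "r \<le> 2 * i + 1" "2 * i + 1 \<le> 2 * s - 1"
  shows "round_robin s m r \<noteq> s + i"
proof
  assume "round_robin s m r = s + i"
  then have "even r" "(r div 2 - 1) mod m = i" using assms by (simp_all add: round_robin_eq_large_iff)
  moreover have "r div 2 - 1 < m" using assms by linarith
  ultimately show False using assms by auto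
qed

lemma round_robin_no_revisit:
  assumes "m \<le> i" "2 * (i - m) + 2 < r" "r \<le> 2 * i + 1" "2 * i + 1 \<le> 2 * s - 1"
  shows "round_robin s m r \<noteq> s + i mod m"
proof
  assume "round_robin s m r = s + i mod m"
  then have "even r" "(r div 2 - 1) mod m = i mod m"
    using assms by (simp_all add: round_robin_eq_large_iff)
  moreover have "i - m < r div 2 - 1" "r div 2 - 1 < i" using assms \<open>even r\<close> by auto
  ultimately show False using mod_neq_in_window by blast
qed

lemma round_robin_recent_visit:
  assumes "m \<le> i" "l < m" "l \<noteq> i mod m"
  shows "\<exists>q. 2 * (i - m) + 2 < q \<and> q \<le> 2 * i + 1 \<and> round_robin s m q = s + l"
proof -
  obtain j where "i - m < j" "j \<le> i" "j mod m = l" using mod_eq_in_window assms(1,2) by blast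
  moreover then have "j \<noteq> i" using assms(3) by auto
  ultimately show ?thesis using assms(1) by (intro exI[of _ "2 * j + 2"]) auto
qed

context
  fixes V :: "'a set" and E :: "'a \<Rightarrow> 'a \<Rightarrow> bool" and \<tau> :: "nat \<Rightarrow> 'a" and s m :: nat
  assumes enum: "bij_betw \<tau> {..<s + m} V" and m_pos: "1 \<le> m" and m_less: "m < s"
    and independent: "\<And>a b. a < s \<Longrightarrow> b < s \<Longrightarrow> \<not> E (\<tau> a) (\<tau> b)"
    and complete: "\<And>a b. a < s \<Longrightarrow> s \<le> b \<Longrightarrow> b < s + m \<Longrightarrow> E (\<tau> a) (\<tau> b) \<and> E (\<tau> b) (\<tau> a)"
begin

abbreviation rr_walk :: "nat \<Rightarrow> 'a" where
  "rr_walk \<equiv> \<lambda>t. \<tau> (round_robin s m t)"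

abbreviation rr_weight :: "nat \<Rightarrow> 'a \<Rightarrow> int" where
  "rr_weight \<equiv> walk_weight (enum_weighting \<tau> (s + m)) rr_walk"

lemma rr_enum_inj: "inj_on \<tau> {..<s + m}"
  using enum by (simp add: bij_betw_def)

lemma rr_enum_weighting: "enum_weighting \<tau> (s + m) \<in> weightings V"
  using enum by (rule enum_weighting_in_weightings)

lemma rr_walk_eq_iff: "r \<le> 2 * s - 1 \<Longrightarrow> c < s + m \<Longrightarrow> rr_walk r = \<tau> c \<longleftrightarrow> round_robin s m r = c"
  using inj_on_eq_iff[OF rr_enum_inj] round_robin_less[OF m_pos] by simp

text \<open>At time $2i+1$ the target has not been visited yet if $i < m$; otherwise every vertex
  outside the independent set has been visited, and the target is the least recently visited one.\<close>
lemma rr_outside_target_lightest: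
  assumes "i + 1 < s" "l < m" "l \<noteq> i mod m"
  shows "rr_weight (2 * i + 1) (\<tau> (s + i mod m)) < rr_weight (2 * i + 1) (\<tau> (s + l))"
proof (cases "i < m")
  case True
  show ?thesis
  proof (rule walk_weight_least_unvisited[OF rr_enum_weighting])
    show "\<forall>r\<in>{1..2 * i + 1}. rr_walk r \<noteq> \<tau> (s + i mod m)"
      using round_robin_first_visit[of i m] True assms(1) rr_walk_eq_iff by auto
    assume "enum_weighting \<tau> (s + m) (\<tau> (s + l)) < enum_weighting \<tau> (s + m) (\<tau> (s + i mod m))"
    then have "l < i" using True assms enum_weighting_apply[OF rr_enum_inj] by simp
    then show "\<exists>r\<in>{1..2 * i + 1}. rr_walk r = \<tau> (s + l)"
      using True by (intro bexI[of _ "2 * l + 2"]) auto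
  qed (use assms enum in \<open>auto simp: bij_betw_def inj_on_eq_iff[OF rr_enum_inj]\<close>)
next
  case False
  then obtain q where q: "2 * (i - m) + 2 < q" "q \<le> 2 * i + 1" "round_robin s m q = s + l"
    using round_robin_recent_visit[of m i l s] assms by auto
  show ?thesis
  proof (rule walk_weight_least_recent)
    show "rr_walk (2 * (i - m) + 2) = \<tau> (s + i mod m)"
      using False by (simp add: le_mod_geq)
    show "\<forall>q'. 2 * (i - m) + 2 < q' \<and> q' \<le> 2 * i + 1 \<longrightarrow> rr_walk q' \<noteq> \<tau> (s + i mod m)"
      using round_robin_no_revisit[of m i] False assms(1) rr_walk_eq_iff m_pos by auto
  qed (use q in auto)
qed

lemma rr_inside_target_lightest:
  assumes "i + 1 < s" "u \<in> V" "u \<noteq> \<tau> (i + 1)"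
  shows "rr_weight (2 * i + 2) (\<tau> (i + 1)) < rr_weight (2 * i + 2) u"
proof (rule walk_weight_least_unvisited[OF rr_enum_weighting])
  show "\<forall>r\<in>{1..2 * i + 2}. rr_walk r \<noteq> \<tau> (i + 1)"
    using assms(1) rr_walk_eq_iff round_robin_eq_small_iff by (auto elim!: oddE)
  obtain c where c: "c < s + m" "u = \<tau> c" using assms(2) enum by (auto simp: bij_betw_def)
  assume "enum_weighting \<tau> (s + m) u < enum_weighting \<tau> (s + m) (\<tau> (i + 1))"
  then have "c < i + 1" using c assms(1) enum_weighting_apply[OF rr_enum_inj] by simp
  then show "\<exists>r\<in>{1..2 * i + 2}. rr_walk r = u"
    using c by (intro bexI[of _ "2 * c + 1"]) auto
qed (use assms enum in \<open>auto simp: bij_betw_def\<close>)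

lemma rr_greedy_step:
  assumes t: "1 \<le> t" "t < 2 * s - 1"
  shows "rr_walk (Suc t) \<in> V \<and> E (rr_walk t) (rr_walk (Suc t)) \<and>
    (\<forall>u\<in>V. E (rr_walk t) u \<and> u \<noteq> rr_walk (Suc t) \<longrightarrow> rr_weight t (rr_walk (Suc t)) < rr_weight t u)"
proof (cases "odd t")
  case True
  then obtain i where t_eq: "t = 2 * i + 1" by (rule oddE)
  have i: "i + 1 < s" "i mod m < m" using t t_eq m_pos by auto
  have "\<tau> (s + i mod m) \<in> V" using enum i by (auto simp: bij_betw_def)
  moreover have "E (\<tau> i) (\<tau> (s + i mod m))" using complete[of i "s + i mod m"] i by simp
  moreover have "rr_weight t (\<tau> (s + i mod m)) < rr_weight t u"
    if "u \<in> V" "E (\<tau> i) u" "u \<noteq> \<tau> (s + i mod m)" for u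
  proof -
    obtain c where c: "c < s + m" "u = \<tau> c" using \<open>u \<in> V\<close> enum by (auto simp: bij_betw_def)
    then have "s \<le> c" using independent[of i c] that(2) i by (cases "c < s") auto
    have "c - s \<noteq> i mod m"
    proof
      assume "c - s = i mod m"
      then have "c = s + i mod m" using \<open>s \<le> c\<close> by simp
      then show False using c that(3) by simp
    qed
    moreover have "u = \<tau> (s + (c - s))" "c - s < m" using c \<open>s \<le> c\<close> by auto
    ultimately show ?thesis using rr_outside_target_lightest[of i "c - s"] t_eq i by simp
  qed
  ultimately show ?thesis using t_eq by simp
next
  case False
  then obtain j where "t = 2 * j" by (auto elim: evenE)
  then obtain i where t_eq: "t = 2 * i + 2" using t by (cases j) auto
  have i: "i + 1 < s" "i mod m < m" using t t_eq m_pos by auto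
  have walk: "rr_walk t = \<tau> (s + i mod m)" "rr_walk (Suc t) = \<tau> (i + 1)"
    using t_eq by (simp_all add: round_robin_def)
  have "\<tau> (i + 1) \<in> V" using enum i by (auto simp: bij_betw_def)
  moreover have "E (\<tau> (s + i mod m)) (\<tau> (i + 1))" using complete[of "i + 1" "s + i mod m"] i by simp
  moreover have "rr_weight t (\<tau> (i + 1)) < rr_weight t u" if "u \<in> V" "u \<noteq> \<tau> (i + 1)" for u
  proof -
    have "rr_weight (2 * i + 2) (\<tau> (i + 1)) < rr_weight (2 * i + 2) u"
      using rr_inside_target_lightest i that by blast
    then show ?thesis by (simp only: t_eq)
  qed
  ultimately show ?thesis unfolding walk by blast
qed

lemma rr_greedy_walk: "greedy_walk V E (enum_weighting \<tau> (s + m)) rr_walk (2 * s - 1)"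
proof -
  have "rr_walk 1 \<in> V" "enum_weighting \<tau> (s + m) (rr_walk 1) = - int (card V)"
    using enum m_less enum_weighting_apply[OF rr_enum_inj, of 0]
    by (auto simp: bij_betw_def card_image[OF rr_enum_inj] round_robin_def)
  then show ?thesis using rr_greedy_step by (simp add: greedy_walk_def)
qed

lemma rr_walk_covers: "V \<subseteq> rr_walk ` {1..2 * s - 1}"
proof
  fix v assume "v \<in> V"
  then obtain c where c: "c < s + m" "v = \<tau> c" using enum by (auto simp: bij_betw_def)
  show "v \<in> rr_walk ` {1..2 * s - 1}"
  proof (cases "c < s")
    case True
    then show ?thesis using c by (intro image_eqI[of _ _ "2 * c + 1"]) auto
  next
    case False
    then have "c = s + (c - s)" "c - s < m" using c by auto
    then show ?thesis using c m_less by (intro image_eqI[of _ _ "2 * (c - s) + 2"]) auto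
  qed
qed

lemma RC_time_independent_set: "RC_time V E (enum_weighting \<tau> (s + m)) \<le> 2 * s - 1"
  using RC_time_le_greedy_walk[OF rr_greedy_walk rr_enum_weighting] rr_walk_covers m_less by simp

end

section \<open>Complete multipartite graphs\<close>

lemma kpart_V_eq_Sigma: "kpart_V k s = Sigma {1..k} (\<lambda>i. {..<s i})"
  by (auto simp: kpart_V_def)

lemma finite_kpart_V: "finite (kpart_V k s)"
  by (simp add: kpart_V_eq_Sigma)

lemma card_kpart_V: "card (kpart_V k s) = (\<Sum>i=1..k. s i)"
  by (simp add: kpart_V_eq_Sigma card_SigmaI)

lemma card_kpart_part: "1 \<le> i \<Longrightarrow> i \<le> k \<Longrightarrow> card {y\<in>kpart_V k s. fst y = i} = s i"
proof -
  assume "1 \<le> i" "i \<le> k"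
  then have "{y\<in>kpart_V k s. fst y = i} = {i} \<times> {..<s i}" by (auto simp: kpart_V_def)
  then show ?thesis by (simp add: card_cartesian_product)
qed

text \<open>Sorting the pairs (part, index) lexicographically lists the vertices part by part.\<close>
definition kpart_list :: "nat \<Rightarrow> (nat \<Rightarrow> nat) \<Rightarrow> (nat \<times> nat) list" where
  "kpart_list k s = sorted_list_of_set (kpart_V k s)"

lemma kpart_list_bij: "bij_betw (nth (kpart_list k s)) {..<card (kpart_V k s)} (kpart_V k s)"
  unfolding kpart_list_def using finite_kpart_V by (intro bij_betw_nth) auto

lemma kpart_list_fst_mono:
  "a \<le> b \<Longrightarrow> b < card (kpart_V k s) \<Longrightarrow> fst (kpart_list k s ! a) \<le> fst (kpart_list k s ! b)"
  unfolding kpart_list_def using finite_kpart_V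
  by (auto simp: less_eq_prod_def dest!: sorted_nth_mono[OF sorted_sorted_list_of_set])

lemma kpart_list_in: "c < card (kpart_V k s) \<Longrightarrow> kpart_list k s ! c \<in> kpart_V k s"
  using kpart_list_bij by (auto simp: bij_betw_def)

text \<open>Positions $n/2, 0, n/2 + 1, 1, \ldots$ of a list of length $n$: consecutive values are at
  least $n/2$ apart.\<close>
definition interleave :: "nat \<Rightarrow> nat \<Rightarrow> nat" where
  "interleave n t = (if even t then t div 2 + n div 2 else t div 2)"

lemma interleave_less: "t < n \<Longrightarrow> interleave n t < n"
proof -
  assume t: "t < n"
  have n: "n = 2 * (n div 2) + n mod 2" "n mod 2 \<le> 1" by auto
  show ?thesis
  proof (cases "even t")
    case True
    then obtain q where "t = 2 * q" by (rule evenE)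
    then show ?thesis using t n by (simp add: interleave_def)
  next
    case False
    then obtain q where "t = 2 * q + 1" by (rule oddE)
    then show ?thesis using t by (simp add: interleave_def)
  qed
qed

lemma interleave_inj: "inj_on (interleave n) {..<n}"
proof (rule inj_onI)
  fix a b assume "a \<in> {..<n}" "b \<in> {..<n}" "interleave n a = interleave n b"
  moreover have "n \<le> 2 * (n div 2) + 1" by auto
  ultimately show "a = b" unfolding interleave_def by (auto split: if_splits elim!: evenE oddE)
qed

lemma interleave_bij: "bij_betw (interleave n) {..<n} {..<n}"
  using interleave_inj interleave_less
  by (simp add: bij_betw_def endo_inj_surj[OF finite_lessThan] image_subset_iff)

lemma interleave_gap:
  "n div 2 \<le> interleave n t - interleave n (Suc t) \<or> n div 2 \<le> interleave n (Suc t) - interleave n t"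
proof (cases "even t")
  case True
  then obtain q where "t = 2 * q" by (rule evenE)
  then show ?thesis by (simp add: interleave_def)
next
  case False
  then obtain q where "t = 2 * q + 1" by (rule oddE)
  then show ?thesis by (simp add: interleave_def)
qed

context
  fixes k :: nat and s :: "nat \<Rightarrow> nat"
  assumes two_parts: "2 \<le> k" and part_pos: "\<And>i. 1 \<le> i \<Longrightarrow> i \<le> k \<Longrightarrow> 1 \<le> s i"
    and part_le_first: "\<And>i. 1 \<le> i \<Longrightarrow> i \<le> k \<Longrightarrow> s i \<le> s 1"
begin

lemma kpart_V_contains_1_2: "(1, 0) \<in> kpart_V k s" "(2, 0) \<in> kpart_V k s"
  using part_pos[of 1] part_pos[of 2] two_parts by (auto simp: kpart_V_def)

lemma kpart_has_neighbour: "\<forall>v\<in>kpart_V k s. \<exists>u\<in>kpart_V k s. kpart_E v u"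
proof
  fix v
  show "\<exists>u\<in>kpart_V k s. kpart_E v u"
  proof (cases "fst v = 1")
    case True
    then show ?thesis using kpart_V_contains_1_2(2) by (intro bexI[of _ "(2, 0)"]) (auto simp: kpart_E_def)
  next
    case False
    then show ?thesis using kpart_V_contains_1_2(1) by (intro bexI[of _ "(1, 0)"]) (auto simp: kpart_E_def)
  qed
qed

lemma kpart_RC_time_lower:
  assumes w0: "w0 \<in> weightings (kpart_V k s)"
  shows "max (card (kpart_V k s)) (2 * s 1 - 1) \<le> RC_time (kpart_V k s) kpart_E w0"
proof -
  have nonempty: "kpart_V k s \<noteq> {}" using kpart_V_contains_1_2 by blast
  have multipartite: "\<And>u v. kpart_E u v \<longleftrightarrow> fst u \<noteq> fst v" by (simp add: kpart_E_def)
  note crawler = finite_kpart_V nonempty w0 kpart_has_neighbour multipartite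
  have "2 * card {y\<in>kpart_V k s. fst y = 1} \<le> RC_time (kpart_V k s) kpart_E w0 + 1"
    by (rule part_card_le_RC_time[OF crawler])
  then show ?thesis using card_le_RC_time[OF crawler] card_kpart_part[of 1 k s] two_parts by simp
qed

lemma kpart_list_same_part_span:
  assumes ab: "a \<le> b" "b < card (kpart_V k s)"
    and same: "fst (kpart_list k s ! a) = fst (kpart_list k s ! b)"
  shows "b - a < s 1"
proof -
  let ?L = "kpart_list k s" and ?i = "fst (kpart_list k s ! a)"
  have i: "1 \<le> ?i" "?i \<le> k" using kpart_list_in[of a k s] ab by (auto simp: kpart_V_def)
  have "nth ?L ` {a..b} \<subseteq> {y\<in>kpart_V k s. fst y = ?i}"
  proof
    fix y assume "y \<in> nth ?L ` {a..b}"
    then obtain c where c: "a \<le> c" "c \<le> b" "y = ?L ! c" by auto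
    then have "?i \<le> fst y" "fst y \<le> fst (?L ! b)" using kpart_list_fst_mono ab by auto
    then show "y \<in> {y\<in>kpart_V k s. fst y = ?i}" using c ab same kpart_list_in[of c k s] by auto
  qed
  moreover have "inj_on (nth ?L) {a..b}"
    using kpart_list_bij[of k s] by (rule bij_betw_imp_inj_on[THEN inj_on_subset]) (use ab in auto)
  ultimately have "card {a..b} \<le> card {y\<in>kpart_V k s. fst y = ?i}"
    using finite_kpart_V by (intro card_inj_on_le) auto
  then show ?thesis using card_kpart_part[OF i] part_le_first[OF i] ab by simp
qed

lemma kpart_list_first_part_iff:
  assumes c: "c < card (kpart_V k s)"
  shows "fst (kpart_list k s ! c) = 1 \<longleftrightarrow> c < s 1"
proof
  assume "fst (kpart_list k s ! c) = 1"
  moreover have "1 \<le> fst (kpart_list k s ! 0)" using kpart_list_in[of 0 k s] c by (auto simp: kpart_V_def)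
  ultimately have "fst (kpart_list k s ! 0) = fst (kpart_list k s ! c)"
    using kpart_list_fst_mono[of 0 c k s] c by simp
  then show "c < s 1" using kpart_list_same_part_span[of 0 c] c by simp
next
  assume "c < s 1"
  show "fst (kpart_list k s ! c) = 1"
  proof (rule ccontr)
    assume "fst (kpart_list k s ! c) \<noteq> 1"
    then have later: "1 < fst (kpart_list k s ! c)" using kpart_list_in[OF c] by (auto simp: kpart_V_def)
    have "{y\<in>kpart_V k s. fst y = 1} \<subseteq> nth (kpart_list k s) ` {..<c}"
    proof
      fix y assume y: "y \<in> {y\<in>kpart_V k s. fst y = 1}"
      then obtain d where d: "d < card (kpart_V k s)" "y = kpart_list k s ! d"
        using kpart_list_bij[of k s] by (auto simp: bij_betw_def)
      have "d < c" using kpart_list_fst_mono[of c d k s] later y d by (cases "c \<le> d") auto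
      then show "y \<in> nth (kpart_list k s) ` {..<c}" using d by auto
    qed
    then have "card {y\<in>kpart_V k s. fst y = 1} \<le> card (nth (kpart_list k s) ` {..<c})"
      by (intro card_mono) auto
    also have "\<dots> \<le> c" using card_image_le[of "{..<c}" "nth (kpart_list k s)"] by simp
    finally have "card {y\<in>kpart_V k s. fst y = 1} \<le> c" .
    then show False using card_kpart_part[of 1 k s] two_parts \<open>c < s 1\<close> by simp
  qed
qed

lemma first_part_less_card: "s 1 < card (kpart_V k s)"
proof -
  have "{y\<in>kpart_V k s. fst y = 1} \<subset> kpart_V k s" using kpart_V_contains_1_2(2) by force
  then have "card {y\<in>kpart_V k s. fst y = 1} < card (kpart_V k s)"
    by (rule psubset_card_mono[OF finite_kpart_V])
  then show ?thesis using card_kpart_part[of 1 k s] two_parts by simp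
qed

lemma kpart_RC_time_balanced:
  assumes balanced: "2 * s 1 \<le> card (kpart_V k s)"
  shows "\<exists>w0\<in>weightings (kpart_V k s). RC_time (kpart_V k s) kpart_E w0 \<le> card (kpart_V k s)"
proof -
  let ?n = "card (kpart_V k s)"
  let ?\<tau> = "\<lambda>t. kpart_list k s ! interleave ?n t"
  have bij: "bij_betw ?\<tau> {..<?n} (kpart_V k s)"
    using bij_betw_trans[OF interleave_bij kpart_list_bij] by (simp add: comp_def)
  have "kpart_E (?\<tau> t) (?\<tau> (Suc t))" if "Suc t < ?n" for t
  proof -
    let ?L = "kpart_list k s" and ?a = "interleave ?n t" and ?b = "interleave ?n (Suc t)"
    have a: "?a < ?n" and b: "?b < ?n" using that interleave_less by simp_all
    have "1 \<le> s 1" using part_pos[of 1] two_parts by simp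
    then have gap: "s 1 \<le> ?a - ?b \<and> ?b \<le> ?a \<or> s 1 \<le> ?b - ?a \<and> ?a \<le> ?b"
      using interleave_gap[of ?n t] balanced by linarith
    have "fst (?L ! ?a) \<noteq> fst (?L ! ?b)"
    proof
      assume same: "fst (?L ! ?a) = fst (?L ! ?b)"
      then have "?b \<le> ?a \<Longrightarrow> ?a - ?b < s 1" "?a \<le> ?b \<Longrightarrow> ?b - ?a < s 1"
        using kpart_list_same_part_span a b by auto
      then show False using gap by linarith
    qed
    then show ?thesis by (simp add: kpart_E_def)
  qed
  then have "RC_time (kpart_V k s) kpart_E (enum_weighting ?\<tau> ?n) \<le> ?n"
    using first_part_less_card by (intro RC_time_hamiltonian_path[OF bij]) auto
  then show ?thesis by (rule bexI[OF _ enum_weighting_in_weightings[OF bij]])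
qed

lemma kpart_RC_time_unbalanced:
  assumes unbalanced: "card (kpart_V k s) < 2 * s 1"
  shows "\<exists>w0\<in>weightings (kpart_V k s). RC_time (kpart_V k s) kpart_E w0 \<le> 2 * s 1 - 1"
proof -
  let ?n = "card (kpart_V k s)" and ?L = "kpart_list k s"
  have n: "?n = s 1 + (?n - s 1)" using first_part_less_card by simp
  have bij: "bij_betw (nth ?L) {..<s 1 + (?n - s 1)} (kpart_V k s)"
    using kpart_list_bij[of k s] n by simp
  have "RC_time (kpart_V k s) kpart_E (enum_weighting (nth ?L) (s 1 + (?n - s 1))) \<le> 2 * s 1 - 1"
  proof (rule RC_time_independent_set[OF bij])
    show "1 \<le> ?n - s 1" "?n - s 1 < s 1" using first_part_less_card unbalanced by auto
    show "\<not> kpart_E (?L ! a) (?L ! b)" if "a < s 1" "b < s 1" for a b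
    proof -
      have "a < ?n" "b < ?n" using that first_part_less_card by simp_all
      then show ?thesis
        using that kpart_list_first_part_iff[of a] kpart_list_first_part_iff[of b]
        by (auto simp: kpart_E_def)
    qed
    show "kpart_E (?L ! a) (?L ! b) \<and> kpart_E (?L ! b) (?L ! a)"
      if "a < s 1" "s 1 \<le> b" "b < s 1 + (?n - s 1)" for a b
    proof -
      have "a < ?n" "b < ?n" using that n by linarith+
      then show ?thesis
        using that kpart_list_first_part_iff[of a] kpart_list_first_part_iff[of b]
        by (auto simp: kpart_E_def)
    qed
  qed
  then show ?thesis by (rule bexI[OF _ enum_weighting_in_weightings[OF bij]])
qed

lemma rc_kpart: "rc (kpart_V k s) kpart_E = max (card (kpart_V k s)) (2 * s 1 - 1)"
proof (cases "2 * s 1 \<le> card (kpart_V k s)")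
  case True
  then obtain w0 where "w0 \<in> weightings (kpart_V k s)" "RC_time (kpart_V k s) kpart_E w0 \<le> card (kpart_V k s)"
    using kpart_RC_time_balanced by blast
  then show ?thesis using True by (intro rc_eqI[OF finite_kpart_V kpart_RC_time_lower]) auto
next
  case False
  then have "card (kpart_V k s) < 2 * s 1" by simp
  then obtain w0 where "w0 \<in> weightings (kpart_V k s)" "RC_time (kpart_V k s) kpart_E w0 \<le> 2 * s 1 - 1"
    using kpart_RC_time_unbalanced by blast
  then show ?thesis using False by (intro rc_eqI[OF finite_kpart_V kpart_RC_time_lower]) auto
qed

end

section \<open>Proportional part sizes\<close>

lemma real_nat_floor_Ints: "x \<in> \<int> \<Longrightarrow> 0 \<le> x \<Longrightarrow> real (nat \<lfloor>x\<rfloor>) = x"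
  by (auto elim!: Ints_cases)

lemma le_first_if_decreasing:
  fixes c :: "nat \<Rightarrow> 'a::order"
  assumes "\<forall>i. 1 \<le> i \<and> i < k \<longrightarrow> c (Suc i) \<le> c i" "1 \<le> i" "i \<le> k"
  shows "c i \<le> c 1"
  using assms(2,3)
proof (induction i rule: dec_induct)
  case (step i)
  then show ?case using assms(1) order_trans by auto
qed simp

lemma proportional_part_sizes:
  fixes c :: "nat \<Rightarrow> real"
  assumes decreasing: "\<forall>i. 1 \<le> i \<and> i < k \<longrightarrow> c (Suc i) \<le> c i"
    and pos: "\<forall>i. 1 \<le> i \<and> i \<le> k \<longrightarrow> c i > 0"
    and integral: "\<forall>i. 1 \<le> i \<and> i \<le> k \<longrightarrow> c i * real n \<in> \<int>"
    and "1 \<le> n" "1 \<le> i" "i \<le> k"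
  shows "real (nat \<lfloor>c i * real n\<rfloor>) = c i * real n"
    and "1 \<le> nat \<lfloor>c i * real n\<rfloor>"
    and "nat \<lfloor>c i * real n\<rfloor> \<le> nat \<lfloor>c 1 * real n\<rfloor>"
proof -
  have "0 < c i * real n" using pos assms(4-6) by simp
  then show "real (nat \<lfloor>c i * real n\<rfloor>) = c i * real n"
    using integral assms(5,6) by (simp add: real_nat_floor_Ints)
  then show "1 \<le> nat \<lfloor>c i * real n\<rfloor>" using \<open>0 < c i * real n\<close> by linarith
  have "c i * real n \<le> c 1 * real n"
    using le_first_if_decreasing[OF decreasing assms(5,6)] by (simp add: mult_right_mono)
  then show "nat \<lfloor>c i * real n\<rfloor> \<le> nat \<lfloor>c 1 * real n\<rfloor>" by (intro nat_mono floor_mono)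
qed

theorem theorem1:
  fixes k n :: nat and c :: "nat \<Rightarrow> real"
  assumes "k \<ge> 3"
    and "\<forall>i. 1 \<le> i \<and> i < k \<longrightarrow> c (Suc i) \<le> c i"
    and "\<forall>i. 1 \<le> i \<and> i \<le> k \<longrightarrow> c i > 0"
    and "(\<Sum>i=1..k. c i) = 1"
    and "n \<ge> 1"
    and "\<forall>i. 1 \<le> i \<and> i \<le> k \<longrightarrow> c i * real n \<in> \<int>"
  shows "(c 1 \<le> 1/2 \<longrightarrow>
            rc (kpart_V k (\<lambda>i. nat \<lfloor>c i * real n\<rfloor>)) kpart_E = n)
       \<and> (c 1 > 1/2 \<longrightarrow>
            real (rc (kpart_V k (\<lambda>i. nat \<lfloor>c i * real n\<rfloor>)) kpart_E) = 2 * c 1 * real n - 1)"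
proof -
  let ?s = "\<lambda>i. nat \<lfloor>c i * real n\<rfloor>"
  note sizes = proportional_part_sizes[OF assms(2,3,6,5)]
  have "real (card (kpart_V k ?s)) = (\<Sum>i=1..k. c i * real n)"
    unfolding card_kpart_V of_nat_sum by (intro sum.cong) (simp_all add: sizes(1))
  also have "\<dots> = real n" using assms(4) by (simp flip: sum_distrib_right)
  finally have "card (kpart_V k ?s) = n" by simp
  moreover have "rc (kpart_V k ?s) kpart_E = max (card (kpart_V k ?s)) (2 * ?s 1 - 1)"
    using assms(1) sizes(2,3) by (intro rc_kpart) auto
  moreover have s1: "real (?s 1) = c 1 * real n" "1 \<le> ?s 1"
    using sizes(1,2)[of 1] assms(1) by simp_all
  moreover have "c 1 \<le> 1/2 \<longleftrightarrow> 2 * ?s 1 \<le> n"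
  proof -
    have "c 1 \<le> 1/2 \<longleftrightarrow> (2 * c 1) * real n \<le> 1 * real n" using assms(5) by (simp add: mult.commute)
    also have "\<dots> \<longleftrightarrow> real (2 * ?s 1) \<le> real n" using s1(1) by (simp add: mult.assoc)
    finally show ?thesis by (simp only: of_nat_le_iff)
  qed
  ultimately show ?thesis by (auto simp: max_def of_nat_diff)
qed

end
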